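(* For every $*$-term $P\land^\circ Q$ with $P\in P^*$ and $Q\in P^d$, the tree $se(P\land^\circ Q)$ has exactly one conjunction decomposition, namely $(se(P)[\mathsf T\mapsto\triangle],\,se(Q))$, and has no disjunction decomposition. For every $*$-term $P\lor^\circ Q$ with $P\in P^*$ and $Q\in P^c$, the tree $se(P\lor^\circ Q)$ has no conjunction decomposition and has exactly one disjunction decomposition, namely $(se(P)[\mathsf F\mapsto\triangle],\,se(Q))$.
   Context: Let $A$ be a nonempty set of atoms; terms are closed terms over constants $\mathsf T,\mathsf F$, atoms $a\in A$, unary $\neg$, binary $\land^\circ$, $\lor^\circ$. Evaluation trees $\mathcal T_A$: $\mathsf T,\mathsf F\in\mathcal T_A$ and $(X\unlhd a\unrhd Y)\in\mathcal T_A$ for $X,Y\in\mathcal T_A$, $a\in A$; depth $d(\mathsf T)=d(\mathsf F)=0$, $d(Y\unlhd a\unrhd Z)=1+\max(d(Y),d(Z))$. $\mathcal T_{A,\triangle}$: the same with leaves in $\{\mathsf T,\mathsf F,\triangle\}$. Leaf replacement $X[\ell_1\mapsto Y_1,\ldots]$ replaces every leaf labelled $\ell_i$ by $Y_i$. $se$: $se(\mathsf T)=\mathsf T$, $se(\mathsf F)=\mathsf F$, $se(a)=\mathsf T\unlhd a\unrhd\mathsf F$, $se(\neg P)=se(P)[\mathsf T\mapsto\mathsf F,\mathsf F\mapsto\mathsf T]$, $se(P\land^\circ Q)=se(P)[\mathsf T\mapsto se(Q)]$, $se(P\lor^\circ Q)=se(P)[\mathsf F\mapsto se(Q)]$. Syntactic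 categories ($a\in A$): $\mathsf T$-terms $P^{\mathsf T}::=\mathsf T\mid(a\land^\circ P^{\mathsf T})\lor^\circ P^{\mathsf T}$; $\mathsf F$-terms $P^{\mathsf F}::=\mathsf F\mid(a\lor^\circ P^{\mathsf F})\land^\circ P^{\mathsf F}$; $\ell$-terms $P^\ell::=(a\land^\circ P^{\mathsf T})\lor^\circ P^{\mathsf F}\mid(\neg a\land^\circ P^{\mathsf T})\lor^\circ P^{\mathsf F}$; $*$-terms $P^*::=P^c\mid P^d$, $P^c::=P^\ell\mid P^*\land^\circ P^d$, $P^d::=P^\ell\mid P^*\lor^\circ P^c$. A pair $(Y,Z)\in\mathcal T_{A,\triangle}\times\mathcal T_A$ is a candidate conjunction decomposition (ccd) of $X\in\mathcal T_A$ if $X=Y[\triangle\mapsto Z]$, $Y$ contains $\triangle$, $Y$ contains $\mathsf F$ but not $\mathsf T$, and $Z$ contains both $\mathsf T$ and $\mathsf F$; it is a candidate disjunction decomposition (cdd) if the same holds with "$Y$ contains $\mathsf T$ but not $\mathsf F$" instead. A ccd $(Y,Z)$ of $X$ is a conjunction decomposition (cd) if there is no other ccd $(Y',Z')$ of $X$ with $d(Z')<d(Z)$; similarly a cdd $(Y,Z)$ is a disjunction decomposition (dd) if there is no other cdd $(Y',Z')$ of $X$ with $d(Z')<d(Z)$. *)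

theory Defs
  imports Main
begin

(* Closed terms over atoms of type 'a (the set A is the universe of 'a, hence nonempty) *)
datatype 'a trm = TT | FF | Atom 'a | Neg "'a trm"
  | LAnd "'a trm" "'a trm" | LOr "'a trm" "'a trm"

datatype leaf = LT | LF | LTri

datatype 'a tree = Leaf leaf | Node "'a tree" 'a "'a tree"
  (* Node X a Y  represents  X <| a |> Y *)

fun depth :: "'a tree \<Rightarrow> nat" where
  "depth (Leaf _) = 0"
| "depth (Node Y a Z) = 1 + max (depth Y) (depth Z)"

fun leaves :: "'a tree \<Rightarrow> leaf set" where
  "leaves (Leaf l) = {l}"
| "leaves (Node Y a Z) = leaves Y \<union> leaves Z"

definition in_TA :: "'a tree \<Rightarrow> bool" where
  "in_TA X \<longleftrightarrow> LTri \<notin> leaves X"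

fun repl :: "'a tree \<Rightarrow> (leaf \<Rightarrow> 'a tree) \<Rightarrow> 'a tree" where
  "repl (Leaf l) f = f l"
| "repl (Node Y a Z) f = Node (repl Y f) a (repl Z f)"

fun se :: "'a trm \<Rightarrow> 'a tree" where
  "se TT = Leaf LT"
| "se FF = Leaf LF"
| "se (Atom a) = Node (Leaf LT) a (Leaf LF)"
| "se (Neg P) = repl (se P) ((\<lambda>l. Leaf l)(LT := Leaf LF, LF := Leaf LT))"
| "se (LAnd P Q) = repl (se P) ((\<lambda>l. Leaf l)(LT := se Q))"
| "se (LOr P Q) = repl (se P) ((\<lambda>l. Leaf l)(LF := se Q))"

inductive Tterm :: "'a trm \<Rightarrow> bool" where
  "Tterm TT"
| "Tterm P \<Longrightarrow> Tterm Q \<Longrightarrow> Tterm (LOr (LAnd (Atom a) P) Q)"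

inductive Fterm :: "'a trm \<Rightarrow> bool" where
  "Fterm FF"
| "Fterm P \<Longrightarrow> Fterm Q \<Longrightarrow> Fterm (LAnd (LOr (Atom a) P) Q)"

inductive lterm :: "'a trm \<Rightarrow> bool" where
  "Tterm P \<Longrightarrow> Fterm Q \<Longrightarrow> lterm (LOr (LAnd (Atom a) P) Q)"
| "Tterm P \<Longrightarrow> Fterm Q \<Longrightarrow> lterm (LOr (LAnd (Neg (Atom a)) P) Q)"

inductive sterm :: "'a trm \<Rightarrow> bool"
  and cterm :: "'a trm \<Rightarrow> bool"
  and dterm :: "'a trm \<Rightarrow> bool" where
  "cterm P \<Longrightarrow> sterm P"
| "dterm P \<Longrightarrow> sterm P"
| "lterm P \<Longrightarrow> cterm P"
| "sterm P \<Longrightarrow> dterm Q \<Longrightarrow> cterm (LAnd P Q)"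
| "lterm P \<Longrightarrow> dterm P"
| "sterm P \<Longrightarrow> cterm Q \<Longrightarrow> dterm (LOr P Q)"

definition ccd :: "'a tree \<Rightarrow> 'a tree \<Rightarrow> 'a tree \<Rightarrow> bool" where
  "ccd X Y Z \<longleftrightarrow> in_TA Z \<and> X = repl Y ((\<lambda>l. Leaf l)(LTri := Z))
     \<and> LTri \<in> leaves Y \<and> LF \<in> leaves Y \<and> LT \<notin> leaves Y
     \<and> LT \<in> leaves Z \<and> LF \<in> leaves Z"

definition cdd :: "'a tree \<Rightarrow> 'a tree \<Rightarrow> 'a tree \<Rightarrow> bool" where
  "cdd X Y Z \<longleftrightarrow> in_TA Z \<and> X = repl Y ((\<lambda>l. Leaf l)(LTri := Z))
     \<and> LTri \<in> leaves Y \<and> LT \<in> leaves Y \<and> LF \<notin> leaves Y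
     \<and> LT \<in> leaves Z \<and> LF \<in> leaves Z"

definition cd :: "'a tree \<Rightarrow> 'a tree \<Rightarrow> 'a tree \<Rightarrow> bool" where
  "cd X Y Z \<longleftrightarrow> ccd X Y Z \<and>
     \<not> (\<exists>Y' Z'. (Y', Z') \<noteq> (Y, Z) \<and> ccd X Y' Z' \<and> depth Z' < depth Z)"

definition dd :: "'a tree \<Rightarrow> 'a tree \<Rightarrow> 'a tree \<Rightarrow> bool" where
  "dd X Y Z \<longleftrightarrow> cdd X Y Z \<and>
     \<not> (\<exists>Y' Z'. (Y', Z') \<noteq> (Y, Z) \<and> cdd X Y' Z' \<and> depth Z' < depth Z)"

end

theory Submission
  imports Defs
begin

text \<open>
  Write \<open>se (P \<and>\<^sup>\<circ> Q)\<close> as the graft \<open>se P[T \<mapsto> se Q]\<close> (dually with \<open>F\<close> for \<open>\<or>\<^sup>\<circ>\<close>).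
  A decomposition \<open>Y[\<triangle> \<mapsto> Z]\<close> of a graft \<open>A[l \<mapsto> U]\<close> cannot cross it: if \<open>Y\<close> kept a leaf
  \<open>l\<close> but lost the other truth value, then \<open>Z\<close> would lie strictly inside a copy of \<open>U\<close> and
  at the same time contain one, contradicting depth.  This rules out decompositions of the dual
  kind.  For the primary kind, a decomposition with \<open>depth Z \<le> depth U\<close> must be the graft
  itself as long as \<open>U\<close> has no nontrivial decomposition avoiding \<open>l\<close>.  For \<open>U = se Q\<close>
  this holds because the top connective of \<open>Q\<close> is the other one (so the same no-crossing
  argument applies one level down) and because no \<open>se\<close> of a \<open>*\<close>-term is a proper power
  \<open>Y[\<triangle> \<mapsto> Z]\<close> with \<open>Y\<close> a nontrivial skeleton of \<open>\<triangle>\<close>-leaves.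
\<close>

definition graft :: "'a tree \<Rightarrow> leaf \<Rightarrow> 'a tree \<Rightarrow> 'a tree" where
  "graft X l U = repl X ((\<lambda>m. Leaf m)(l := U))"

lemma graft_Leaf [simp]: "graft (Leaf m) l U = (if m = l then U else Leaf m)"
  by (simp add: graft_def)

lemma graft_Node [simp]: "graft (Node X a Y) l U = Node (graft X l U) a (graft Y l U)"
  by (simp add: graft_def)

lemma leaves_nonempty: "leaves X \<noteq> {}"
  by (induction X) auto

lemma leaves_repl: "leaves (repl X f) = (\<Union>l\<in>leaves X. leaves (f l))"
  by (induction X) auto

lemma leaves_graft:
  "leaves (graft X l U) = leaves X - {l} \<union> (if l \<in> leaves X then leaves U else {})"
  by (auto simp: graft_def leaves_repl split: if_splits)

lemma graft_triv: "l \<notin> leaves X \<Longrightarrow> graft X l U = X"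
  by (induction X) auto

lemma graft_graft: "l \<notin> leaves Y \<Longrightarrow> graft (graft Y m A) l U = graft Y m (graft A l U)"
  by (induction Y) auto

lemma graft_rename: "m \<notin> leaves X \<Longrightarrow> graft (graft X l (Leaf m)) m U = graft X l U"
  by (induction X) auto

lemma depth_graft_ge: "l \<in> leaves X \<Longrightarrow> depth U \<le> depth (graft X l U)"
  by (induction X) auto

lemma depth_graft_gt: "l \<in> leaves X \<Longrightarrow> X \<noteq> Leaf l \<Longrightarrow> depth U < depth (graft X l U)"
  by (cases X) (auto dest: depth_graft_ge[where U = U])

lemma graft_eq_self_iff: "l \<in> leaves U \<Longrightarrow> graft X l U = U \<longleftrightarrow> X = Leaf l"
proof
  assume l: "l \<in> leaves U" and eq: "graft X l U = U"
  show "X = Leaf l"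
  proof (rule ccontr)
    assume "X \<noteq> Leaf l"
    moreover have "l \<in> leaves X"
      using l eq graft_triv[of l X U] by (cases "l \<in> leaves X") auto
    ultimately show False
      using depth_graft_gt[of l X U] eq by simp
  qed
qed simp

lemma graft_inj: "l \<in> leaves U \<Longrightarrow> graft X l U = graft X' l U \<Longrightarrow> X = X'"
proof (induction X arbitrary: X')
  case (Leaf m)
  then show ?case
    using graft_eq_self_iff[of l U X'] by (cases X') (auto split: if_splits)
next
  case (Node X1 a X2)
  then show ?case
    using graft_eq_self_iff[of l U "Node X1 a X2"] by (cases X') (auto split: if_splits)
qed

lemma graft_eq_graftD_hole:
  assumes "graft X l U = graft Y h Z" "m \<in> leaves X" "m \<noteq> l" "m \<notin> leaves Y"
  shows "\<exists>X'. Z = graft X' l U"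
  using assms
proof (induction X arbitrary: Y)
  case (Leaf x)
  then show ?case
    by (cases Y) (auto split: if_splits intro: exI[of _ "Leaf m"])
next
  case (Node X1 a X2)
  then show ?case
    by (cases Y) (auto split: if_splits intro: exI[of _ "Node X1 a X2"])
qed

lemma graft_eq_graftD_content:
  assumes "graft X l U = graft Y h Z" "l \<in> leaves Y" "l \<noteq> h"
  shows "\<exists>Y'. U = graft Y' h Z \<and> l \<in> leaves Y' \<and> leaves Y' \<subseteq> leaves Y"
  using assms
proof (induction X arbitrary: Y)
  case (Leaf x)
  then show ?case
  proof (cases "x = l")
    case False
    with Leaf show ?thesis
      by (cases Y) (auto split: if_splits)
  qed auto
next
  case (Node X1 a X2)
  then show ?case
    by (cases Y) (fastforce split: if_splits)+
qed

text \<open>\<open>Z\<close> sits strictly inside a copy of \<open>U\<close>, yet contains a copy of \<open>U\<close>.\<close>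

lemma no_crossing_grafts:
  assumes eq: "graft X l U = graft Y h Z" and "l \<in> leaves Y" "l \<in> leaves Z" "l \<noteq> h"
    and "m \<in> leaves X" "m \<in> leaves U" "m \<notin> leaves Y" "m \<noteq> l"
  shows False
proof -
  obtain Y' where Y': "U = graft Y' h Z" "l \<in> leaves Y'" "m \<notin> leaves Y'"
    using graft_eq_graftD_content[OF eq] assms by blast
  have "h \<in> leaves Y'"
    using Y' \<open>m \<in> leaves U\<close> by (auto simp: leaves_graft split: if_splits)
  moreover have "Y' \<noteq> Leaf h"
    using Y'(2) \<open>l \<noteq> h\<close> by auto
  ultimately have "depth Z < depth U"
    using depth_graft_gt[of h Y' Z] Y'(1) by simp
  obtain X' where X': "Z = graft X' l U"
    using graft_eq_graftD_hole[OF eq] assms by blast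
  have "l \<in> leaves X'"
    using X' \<open>l \<in> leaves Z\<close> by (auto simp: leaves_graft split: if_splits)
  then have "depth U \<le> depth Z"
    using depth_graft_ge[of l X' U] X' by simp
  with \<open>depth Z < depth U\<close> show False
    by simp
qed

lemma graft_eq_graft_shallow:
  assumes "graft X l U = graft Y h Z" "l \<notin> leaves Y" "l \<in> leaves Z" "depth Z \<le> depth U" "l \<noteq> h"
    and "\<And>Y'. U = graft Y' h Z \<Longrightarrow> l \<notin> leaves Y' \<Longrightarrow> Y' = Leaf h"
  shows "Y = graft X l (Leaf h) \<and> (l \<in> leaves X \<longrightarrow> Z = U)"
  using assms(1,2)
proof (induction X arbitrary: Y)
  case (Leaf x)
  show ?case
  proof (cases "x = l")
    case True
    then show ?thesis
      using Leaf assms(6) by fastforce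
  next
    case False
    with Leaf show ?thesis
      using assms(3) by (cases Y) (auto split: if_splits)
  qed
next
  case (Node X1 a X2)
  show ?case
  proof (cases Y)
    case (Leaf y)
    have "y = h" "Z = graft (Node X1 a X2) l U"
      using Node.prems Leaf by (auto split: if_splits)
    moreover from this have "l \<in> leaves (Node X1 a X2)"
      using assms(3) by (auto simp only: leaves_graft split: if_splits)
    ultimately show ?thesis
      using depth_graft_gt[of l "Node X1 a X2" U] assms(4) by auto
  next
    case (Node Y1 b Y2)
    with Node.prems Node.IH show ?thesis
      by auto
  qed
qed

lemma se_LAnd [simp]: "se (LAnd P Q) = graft (se P) LT (se Q)"
  by (simp add: graft_def)

lemma se_LOr [simp]: "se (LOr P Q) = graft (se P) LF (se Q)"
  by (simp add: graft_def)

declare se.simps(5,6) [simp del]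

lemma LTri_notin_se: "LTri \<notin> leaves (se P)"
  by (induction P) (auto simp: leaves_repl leaves_graft)

lemma Tterm_leaves: "Tterm P \<Longrightarrow> leaves (se P) = {LT}"
  by (induction rule: Tterm.induct) (auto simp: leaves_graft)

lemma Fterm_leaves: "Fterm P \<Longrightarrow> leaves (se P) = {LF}"
  by (induction rule: Fterm.induct) (auto simp: leaves_graft)

lemma lterm_se:
  "lterm P \<Longrightarrow> \<exists>A a B l l'. se P = Node A a B \<and> leaves A = {l} \<and> leaves B = {l'} \<and> {l, l'} = {LT, LF}"
  by (induction rule: lterm.induct) (auto simp: graft_triv Tterm_leaves Fterm_leaves)

lemma lterm_leaves: "lterm P \<Longrightarrow> leaves (se P) = {LT, LF}"
  by (induction rule: lterm.induct) (auto simp: leaves_graft Tterm_leaves Fterm_leaves)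

lemma se_leaves:
  shows "sterm P \<Longrightarrow> {LT, LF} \<subseteq> leaves (se P)"
    and "cterm P \<Longrightarrow> {LT, LF} \<subseteq> leaves (se P)"
    and "dterm P \<Longrightarrow> {LT, LF} \<subseteq> leaves (se P)"
  by (induction rule: sterm_cterm_dterm.inducts) (simp_all add: lterm_leaves leaves_graft)

lemma graft_eq_power_graftD:
  assumes eq: "graft X l U = graft Y h Z" and "leaves Y = {h}" "l \<in> leaves U" "l \<noteq> h"
    and "m \<in> leaves X" "m \<noteq> l" "m \<noteq> h"
  shows "\<exists>X'. X = graft Y h X'"
proof -
  obtain X' where X': "Z = graft X' l U"
    using graft_eq_graftD_hole[OF eq] assms by blast
  have "graft X l U = graft (graft Y h X') l U"
    using eq X' graft_graft[of l Y h X' U] assms by simp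
  then show ?thesis
    using graft_inj \<open>l \<in> leaves U\<close> by blast
qed

lemma lterm_se_decomp_trivial:
  assumes "lterm P" "se P = graft Y h Z" "{LT, LF} \<subseteq> leaves Z" "\<not> {LT, LF} \<subseteq> leaves Y"
  shows "Y = Leaf h"
proof -
  obtain A a B l l' where AB: "se P = Node A a B" "leaves A = {l}" "leaves B = {l'}" "{l, l'} = {LT, LF}"
    using lterm_se[OF \<open>lterm P\<close>] by blast
  have no_hole: "graft W h Z = W" if "leaves (graft W h Z) = {l}" for W l
  proof (rule graft_triv, rule notI)
    assume "h \<in> leaves W"
    then have "leaves Z \<subseteq> {l}"
      using that by (auto simp: leaves_graft)
    with assms(3) show False
      by auto
  qed
  show ?thesis
  proof (cases Y)
    case (Leaf y)
    then show ?thesis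
      using AB(1) assms(2) by (auto split: if_splits)
  next
    case (Node Y1 b Y2)
    then have "A = graft Y1 h Z" "B = graft Y2 h Z"
      using AB(1) assms(2) by simp_all
    then have "A = Y1" "B = Y2"
      using AB(2,3) no_hole by metis+
    then have "leaves Y = {l, l'}"
      using AB(2,3) Node by (simp add: insert_commute)
    with AB(4) assms(4) show ?thesis
      by simp
  qed
qed

definition proper_power :: "'a tree \<Rightarrow> bool" where
  "proper_power X \<longleftrightarrow> (\<exists>Y Z. X = graft Y LTri Z \<and> leaves Y = {LTri} \<and> Y \<noteq> Leaf LTri)"

lemma lterm_not_proper_power:
  assumes "lterm P"
  shows "\<not> proper_power (se P)"
proof
  assume "proper_power (se P)"
  then obtain Y Z where YZ: "se P = graft Y LTri Z" "leaves Y = {LTri}" "Y \<noteq> Leaf LTri"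
    by (auto simp: proper_power_def)
  then have "leaves Z = {LT, LF}"
    using lterm_leaves[OF assms] by (simp add: leaves_graft)
  then show False
    using lterm_se_decomp_trivial[OF assms YZ(1)] YZ(2,3) by simp
qed

lemma proper_power_graftD:
  assumes "proper_power (graft X l U)" "l \<in> leaves U" "l \<noteq> LTri" "m \<in> leaves X" "m \<noteq> l" "m \<noteq> LTri"
  shows "proper_power X"
proof -
  obtain Y Z where YZ: "graft X l U = graft Y LTri Z" "leaves Y = {LTri}" "Y \<noteq> Leaf LTri"
    using assms(1) by (auto simp: proper_power_def)
  then obtain X' where "X = graft Y LTri X'"
    using graft_eq_power_graftD[OF YZ(1,2)] assms(2-6) by blast
  with YZ(2,3) show ?thesis
    by (auto simp: proper_power_def)
qed

lemma se_not_proper_power: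
  shows "sterm P \<Longrightarrow> \<not> proper_power (se P)"
    and "cterm P \<Longrightarrow> \<not> proper_power (se P)"
    and "dterm P \<Longrightarrow> \<not> proper_power (se P)"
proof (induction rule: sterm_cterm_dterm.inducts)
  case (4 P Q)
  then show ?case
    using proper_power_graftD[of "se P" LT "se Q" LF] se_leaves(1)[of P] se_leaves(3)[of Q] by auto
next
  case (6 P Q)
  then show ?case
    using proper_power_graftD[of "se P" LF "se Q" LT] se_leaves(1)[of P] se_leaves(2)[of Q] by auto
qed (simp_all add: lterm_not_proper_power)

lemma graft_decomp_trivial:
  assumes ll: "l0 = LT \<and> l1 = LF \<or> l0 = LF \<and> l1 = LT" and eq: "graft X l1 U = graft Y LTri Z"
    and "l0 \<in> leaves X" "l0 \<in> leaves U" "l0 \<notin> leaves Y" "l1 \<in> leaves Z"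
    and not_power: "\<not> proper_power (graft X l1 U)"
  shows "Y = Leaf LTri"
proof -
  have "l0 \<noteq> l1" "l1 \<noteq> LTri"
    using ll by auto
  then have "l1 \<notin> leaves Y"
    using no_crossing_grafts[OF eq _ \<open>l1 \<in> leaves Z\<close> _ \<open>l0 \<in> leaves X\<close> \<open>l0 \<in> leaves U\<close> \<open>l0 \<notin> leaves Y\<close>]
    by blast
  then have "x = LTri" if "x \<in> leaves Y" for x
    using that ll \<open>l0 \<notin> leaves Y\<close> by (cases x) auto
  then have "leaves Y = {LTri}"
    using leaves_nonempty[of Y] by blast
  with eq not_power show ?thesis
    unfolding proper_power_def by blast
qed

lemma dterm_se_decomp_trivial:
  assumes "dterm Q" "se Q = graft Y LTri Z" "LT \<notin> leaves Y" "{LT, LF} \<subseteq> leaves Z"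
  shows "Y = Leaf LTri"
  using assms(1)
proof (cases rule: dterm.cases)
  case 1
  show ?thesis
    by (rule lterm_se_decomp_trivial[OF 1 assms(2,4)]) (use assms(3) in simp)
next
  case (2 R S)
  have "\<not> proper_power (graft (se R) LF (se S))"
    using se_not_proper_power(3)[OF assms(1)] 2 by simp
  moreover have "graft (se R) LF (se S) = graft Y LTri Z"
    using assms(2) 2 by simp
  ultimately show ?thesis
    using graft_decomp_trivial[of LT LF "se R" "se S" Y Z] se_leaves(1)[OF 2(2)] se_leaves(2)[OF 2(3)] assms(3,4)
    by simp
qed

lemma cterm_se_decomp_trivial:
  assumes "cterm Q" "se Q = graft Y LTri Z" "LF \<notin> leaves Y" "{LT, LF} \<subseteq> leaves Z"
  shows "Y = Leaf LTri"
  using assms(1)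
proof (cases rule: cterm.cases)
  case 1
  show ?thesis
    by (rule lterm_se_decomp_trivial[OF 1 assms(2,4)]) (use assms(3) in simp)
next
  case (2 R S)
  have "\<not> proper_power (graft (se R) LT (se S))"
    using se_not_proper_power(2)[OF assms(1)] 2 by simp
  moreover have "graft (se R) LT (se S) = graft Y LTri Z"
    using assms(2) 2 by simp
  ultimately show ?thesis
    using graft_decomp_trivial[of LF LT "se R" "se S" Y Z] se_leaves(1)[OF 2(2)] se_leaves(3)[OF 2(3)] assms(3,4)
    by simp
qed

lemma unique_minimal_iff:
  fixes f :: "'b \<Rightarrow> 'c::linorder"
  assumes "R y0 z0" and "\<And>y z. R y z \<Longrightarrow> f z \<le> f z0 \<Longrightarrow> (y, z) = (y0, z0)"
  shows "(R y z \<and> \<not> (\<exists>y' z'. (y', z') \<noteq> (y, z) \<and> R y' z' \<and> f z' < f z))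
    \<longleftrightarrow> (y, z) = (y0, z0)"
proof
  assume min: "R y z \<and> \<not> (\<exists>y' z'. (y', z') \<noteq> (y, z) \<and> R y' z' \<and> f z' < f z)"
  show "(y, z) = (y0, z0)"
  proof (cases "f z \<le> f z0")
    case True
    with min assms(2) show ?thesis
      by blast
  next
    case False
    then have "(y0, z0) \<noteq> (y, z)" "f z0 < f z"
      by auto
    with min assms(1) show ?thesis
      by blast
  qed
next
  assume yz: "(y, z) = (y0, z0)"
  have "(y', z') = (y0, z0)" if "R y' z'" "f z' < f z0" for y' z'
    using assms(2) that by simp
  with yz assms(1) show "R y z \<and> \<not> (\<exists>y' z'. (y', z') \<noteq> (y, z) \<and> R y' z' \<and> f z' < f z)"
    by auto
qed

definition cand_decomp :: "leaf \<Rightarrow> leaf \<Rightarrow> 'a tree \<Rightarrow> 'a tree \<Rightarrow> 'a tree \<Rightarrow> bool" where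
  "cand_decomp l0 l1 X Y Z \<longleftrightarrow> in_TA Z \<and> X = graft Y LTri Z
     \<and> LTri \<in> leaves Y \<and> l1 \<in> leaves Y \<and> l0 \<notin> leaves Y \<and> LT \<in> leaves Z \<and> LF \<in> leaves Z"

lemma ccd_iff: "ccd X Y Z \<longleftrightarrow> cand_decomp LT LF X Y Z"
  by (simp add: ccd_def cand_decomp_def graft_def)

lemma cdd_iff: "cdd X Y Z \<longleftrightarrow> cand_decomp LF LT X Y Z"
  by (simp add: cdd_def cand_decomp_def graft_def)

lemma decompositions_of_graft:
  assumes ll: "l0 = LT \<and> l1 = LF \<or> l0 = LF \<and> l1 = LT"
    and X: "l0 \<in> leaves X" "l1 \<in> leaves X" "LTri \<notin> leaves X"
    and U: "LT \<in> leaves U" "LF \<in> leaves U" "LTri \<notin> leaves U"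
    and trivial: "\<And>Y Z. U = graft Y LTri Z \<Longrightarrow> l0 \<notin> leaves Y \<Longrightarrow> {LT, LF} \<subseteq> leaves Z \<Longrightarrow> Y = Leaf LTri"
  shows "(cand_decomp l0 l1 (graft X l0 U) Y Z
      \<and> \<not> (\<exists>Y' Z'. (Y', Z') \<noteq> (Y, Z) \<and> cand_decomp l0 l1 (graft X l0 U) Y' Z' \<and> depth Z' < depth Z))
    \<longleftrightarrow> (Y, Z) = (graft X l0 (Leaf LTri), U)"
    and "\<not> cand_decomp l1 l0 (graft X l0 U) Y Z"
proof -
  have l: "l0 \<noteq> LTri" "l1 \<noteq> LTri" "l0 \<noteq> l1" "l0 \<in> leaves U" "l1 \<in> leaves U"
    using ll U by auto
  have "graft (graft X l0 (Leaf LTri)) LTri U = graft X l0 U"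
    using graft_rename X(3) by blast
  moreover have "leaves (graft X l0 (Leaf LTri)) = leaves X - {l0} \<union> {LTri}"
    using X(1) by (simp add: leaves_graft)
  ultimately have cand: "cand_decomp l0 l1 (graft X l0 U) (graft X l0 (Leaf LTri)) U"
    using l X U by (auto simp: cand_decomp_def in_TA_def)
  have unique: "(Y', Z') = (graft X l0 (Leaf LTri), U)"
    if "cand_decomp l0 l1 (graft X l0 U) Y' Z'" "depth Z' \<le> depth U" for Y' Z'
  proof -
    have "graft X l0 U = graft Y' LTri Z'" "l0 \<notin> leaves Y'" "LT \<in> leaves Z'" "LF \<in> leaves Z'"
      using that(1) by (auto simp: cand_decomp_def)
    moreover from this have "l0 \<in> leaves Z'"
      using ll by auto
    ultimately show ?thesis
      using graft_eq_graft_shallow[of X l0 U Y' LTri Z'] that(2) l(1) X(1) trivial by auto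
  qed
  show "(cand_decomp l0 l1 (graft X l0 U) Y Z
      \<and> \<not> (\<exists>Y' Z'. (Y', Z') \<noteq> (Y, Z) \<and> cand_decomp l0 l1 (graft X l0 U) Y' Z' \<and> depth Z' < depth Z))
    \<longleftrightarrow> (Y, Z) = (graft X l0 (Leaf LTri), U)"
    using unique_minimal_iff[of "cand_decomp l0 l1 (graft X l0 U)", OF cand unique] .
  show "\<not> cand_decomp l1 l0 (graft X l0 U) Y Z"
  proof
    assume "cand_decomp l1 l0 (graft X l0 U) Y Z"
    then have "graft X l0 U = graft Y LTri Z" "l0 \<in> leaves Y" "l1 \<notin> leaves Y" "l0 \<in> leaves Z"
      using ll by (auto simp: cand_decomp_def)
    then show False
      using no_crossing_grafts l X(2) by metis
  qed
qed

theorem theorem3p6: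
  fixes P Q :: "'a trm"
  shows "(sterm P \<and> dterm Q \<longrightarrow>
            (\<forall>Y Z. cd (se (LAnd P Q)) Y Z \<longleftrightarrow>
                   (Y, Z) = (repl (se P) ((\<lambda>l. Leaf l)(LT := Leaf LTri)), se Q))
          \<and> (\<nexists>Y Z. dd (se (LAnd P Q)) Y Z))
       \<and> (sterm P \<and> cterm Q \<longrightarrow>
            (\<nexists>Y Z. cd (se (LOr P Q)) Y Z)
          \<and> (\<forall>Y Z. dd (se (LOr P Q)) Y Z \<longleftrightarrow>
                   (Y, Z) = (repl (se P) ((\<lambda>l. Leaf l)(LF := Leaf LTri)), se Q)))"
proof (intro conjI impI; elim conjE)
  assume "sterm P" "dterm Q"
  note decomps = decompositions_of_graft[of LT LF "se P" "se Q",
      OF _ _ _ LTri_notin_se _ _ LTri_notin_se dterm_se_decomp_trivial[OF \<open>dterm Q\<close>]]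
  have "{LT, LF} \<subseteq> leaves (se P)" "{LT, LF} \<subseteq> leaves (se Q)"
    using se_leaves \<open>sterm P\<close> \<open>dterm Q\<close> by auto
  with decomps show "\<forall>Y Z. cd (se (LAnd P Q)) Y Z \<longleftrightarrow>
      (Y, Z) = (repl (se P) ((\<lambda>l. Leaf l)(LT := Leaf LTri)), se Q)"
    and "\<nexists>Y Z. dd (se (LAnd P Q)) Y Z"
    unfolding cd_def dd_def ccd_iff cdd_iff graft_def[symmetric] by auto
next
  assume "sterm P" "cterm Q"
  note decomps = decompositions_of_graft[of LF LT "se P" "se Q",
      OF _ _ _ LTri_notin_se _ _ LTri_notin_se cterm_se_decomp_trivial[OF \<open>cterm Q\<close>]]
  have "{LT, LF} \<subseteq> leaves (se P)" "{LT, LF} \<subseteq> leaves (se Q)"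
    using se_leaves \<open>sterm P\<close> \<open>cterm Q\<close> by auto
  with decomps show "\<nexists>Y Z. cd (se (LOr P Q)) Y Z"
    and "\<forall>Y Z. dd (se (LOr P Q)) Y Z \<longleftrightarrow>
      (Y, Z) = (repl (se P) ((\<lambda>l. Leaf l)(LF := Leaf LTri)), se Q)"
    unfolding cd_def dd_def ccd_iff cdd_iff graft_def[symmetric] by auto
qed

end
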